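(* Let $\ell\ge1$, $c>0$, let $h_1,\dots,h_\ell$ be i.i.d. $\mathcal{CN}(0,1)$, and for $x>0$ define $\psi_\ell(x)=\frac1x\Pr\left[\sum_{i=1}^{\ell}|h_i|^2>\frac{\ell c}{x}\right]$. Let $\phi_\ell(y)=\frac{y^\ell}{(\ell-1)!}-\sum_{i=0}^{\ell-1}\frac{y^i}{i!}$. Then $\phi_\ell$ has a unique positive root $y_\ell$, which satisfies $y_\ell\le\ell$; the function $\psi_\ell$ is increasing on $(0,x_\ell]$ and decreasing on $[x_\ell,\infty)$, where $x_\ell=\ell c/y_\ell\ge c$. *)

theory Defs
  imports "HOL-Probability.Probability"
begin

text \<open>Density of the standard circularly-symmetric complex Gaussian CN(0,1)
  with respect to Lebesgue measure on the complex plane: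
  (1/pi) exp(-|z|^2), i.e. real and imaginary parts independent N(0,1/2).\<close>
definition cn01_density :: "complex \<Rightarrow> real" where
  "cn01_density z = exp (- (cmod z)\<^sup>2) / pi"

definition psi :: "'a measure \<Rightarrow> (nat \<Rightarrow> 'a \<Rightarrow> complex) \<Rightarrow> nat \<Rightarrow> real \<Rightarrow> real \<Rightarrow> real" where
  "psi M h l c x = (1 / x) *
     measure M {\<omega> \<in> space M. (\<Sum>i<l. (cmod (h i \<omega>))\<^sup>2) > real l * c / x}"

definition phi :: "nat \<Rightarrow> real \<Rightarrow> real" where
  "phi l y = y ^ l / fact (l - 1) - (\<Sum>i<l. y ^ i / fact i)"

end

theory Submission
  imports Defs "HOL-Analysis.Ball_Volume"
begin

(* If h_1,...,h_l are i.i.d. CN(0,1), each |h_i|^2 is Exp(1)-distributed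
   (its tail is exp(-a), computed by writing exp(-|z|^2) as a tail integral of exp(-s)
   and swapping integrals), so S = sum |h_i|^2 is Erlang with tail
   Pr[S > t] = exp(-t) * sum_{n<l} t^n/n!.  With t = l c / x this gives
   psi(x) = G(t) / (l c), where G(t) = t Pr[S > t], and G'(t) = - exp(-t) phi_l(t).
   Since phi_l(y)/y^l is strictly increasing on (0,oo), phi_l(0) = -1 and
   phi_l(l) >= 0, phi_l has exactly one positive root y_l, it lies in (0,l], and
   phi_l is negative before and positive after it.  Hence G increases on (0,y_l] and
   decreases on [y_l,oo); as t = l c / x is decreasing in x, psi increases on
   (0, l c/y_l] and decreases on [l c/y_l, oo).
   The file treats, in order: the polynomial phi_l, the function G, the
   distribution of S, and finally the monotonicity of psi. *)


subsection \<open>The polynomial phi and its positive root\<close>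

lemma phi_over_power:
  assumes "y > 0"
  shows "phi l y / y ^ l = 1 / fact (l - 1) - (\<Sum>i<l. 1 / (fact i * y ^ (l - i)))"
proof -
  have "(\<Sum>i<l. y ^ i / fact i) / y ^ l = (\<Sum>i<l. 1 / (fact i * y ^ (l - i)))"
    unfolding sum_divide_distrib
  proof (intro sum.cong refl)
    fix i assume "i \<in> {..<l}"
    then have "y ^ l = y ^ i * y ^ (l - i)" by (simp add: power_add[symmetric])
    then show "y ^ i / fact i / y ^ l = 1 / (fact i * y ^ (l - i))"
      using assms by (simp add: field_simps)
  qed
  then show ?thesis using assms unfolding phi_def by (simp add: diff_divide_distrib)
qed

text \<open>Hence phi(y)/y^l is strictly increasing on the positive reals; this is the
  key to the uniqueness of the root and to the sign pattern of phi.\<close>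
lemma phi_over_power_strict_mono:
  assumes "l \<ge> 1" "0 < u" "u < v"
  shows "phi l u / u ^ l < phi l v / v ^ l"
proof -
  have "(\<Sum>i<l. 1 / (fact i * v ^ (l - i))) < (\<Sum>i<l. 1 / (fact i * u ^ (l - i)))"
  proof (rule sum_strict_mono)
    show "{..<l} \<noteq> {}" using assms by (simp add: lessThan_empty_iff)
    fix i assume "i \<in> {..<l}"
    then have "u ^ (l - i) < v ^ (l - i)" using assms by (intro power_strict_mono) auto
    moreover have "0 < u ^ (l - i)" using assms by simp
    ultimately show "1 / (fact i * v ^ (l - i)) < 1 / (fact i * u ^ (l - i))"
      by (intro divide_strict_left_mono mult_strict_left_mono) auto
  qed simp
  then show ?thesis using assms by (simp add: phi_over_power)
qed

lemma phi_at_zero: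
  assumes "l \<ge> 1"
  shows "phi l 0 = -1"
proof -
  have "(\<Sum>i<l. (0::real) ^ i / fact i) = (\<Sum>i<l. if i = 0 then 1 else 0)"
    by (intro sum.cong) auto
  also have "\<dots> = 1" using assms by (simp add: sum.delta)
  finally show ?thesis using assms unfolding phi_def by simp
qed

text \<open>At y = l the terms l^i/i! increase with i < l, so their sum is at most
  l * l^(l-1)/(l-1)!; this yields the bound y_l \<le> l.\<close>
lemma phi_at_l_nonneg:
  assumes "l \<ge> 1"
  shows "phi l (real l) \<ge> 0"
proof -
  let ?a = "\<lambda>i. real l ^ i / fact i"
  have ratio_step: "?a k \<le> ?a (Suc k)" if "k < l" for k
  proof -
    have "?a k * 1 \<le> ?a k * (real l / real (Suc k))"
      using that by (intro mult_left_mono) auto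
    also have "\<dots> = ?a (Suc k)" by (simp add: field_simps)
    finally show ?thesis by simp
  qed
  have below_last: "?a i \<le> ?a (l - 1)" if "i \<le> l - 1" for i
    using that
  proof (induction rule: dec_induct)
    case (step n)
    then show ?case using ratio_step[of n] by linarith
  qed simp
  have "(\<Sum>i<l. ?a i) \<le> (\<Sum>i<l. ?a (l - 1))"
    by (intro sum_mono below_last) auto
  also have "\<dots> = real l ^ l / fact (l - 1)"
    using assms by (cases l) auto
  finally show ?thesis unfolding phi_def by simp
qed

lemma continuous_phi: "continuous_on A (phi l)"
  unfolding phi_def by (intro continuous_intros) auto

lemma phi_root_exists:
  assumes "l \<ge> 1"
  shows "\<exists>y. 0 < y \<and> y \<le> real l \<and> phi l y = 0"
proof -
  have "\<exists>y. 0 \<le> y \<and> y \<le> real l \<and> phi l y = 0"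
    using assms phi_at_zero[OF assms] phi_at_l_nonneg[OF assms]
    by (intro IVT' continuous_phi) auto
  then obtain y where y: "0 \<le> y" "y \<le> real l" "phi l y = 0" by auto
  moreover have "y \<noteq> 0" using y phi_at_zero[OF assms] by auto
  ultimately show ?thesis by (intro exI[of _ y]) auto
qed

lemma phi_neg_below_root:
  assumes "l \<ge> 1" "0 < t" "t < y" "phi l y = 0"
  shows "phi l t < 0"
proof -
  have "phi l t / t ^ l < phi l y / y ^ l" using assms by (intro phi_over_power_strict_mono) auto
  then show ?thesis using assms by (simp add: divide_less_0_iff)
qed

lemma phi_pos_above_root:
  assumes "l \<ge> 1" "0 < y" "y < t" "phi l y = 0"
  shows "phi l t > 0"
proof -
  have "phi l y / y ^ l < phi l t / t ^ l" using assms by (intro phi_over_power_strict_mono) auto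
  then show ?thesis using assms by (simp add: zero_less_divide_iff)
qed

lemma phi_unique_positive_root:
  assumes "l \<ge> 1"
  shows "\<exists>!y. y > 0 \<and> phi l y = 0"
proof -
  obtain y0 where y0: "0 < y0" "phi l y0 = 0" using phi_root_exists[OF assms] by auto
  have "y = y0" if "y > 0" "phi l y = 0" for y
    using phi_neg_below_root[OF assms, of y y0] phi_pos_above_root[OF assms y0(1), of y] that y0
    by (cases y y0 rule: linorder_cases) auto
  with y0 show ?thesis by blast
qed

lemma phi_positive_root_le:
  assumes "l \<ge> 1" "y > 0" "phi l y = 0"
  shows "y \<le> real l"
  using phi_neg_below_root[OF assms(1), of "real l" y] phi_at_l_nonneg[OF assms(1)] assms
  by force


subsection \<open>The function G(t) = t Pr[S > t] and its monotonicity\<close>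

text \<open>For S Erlang with l phases, G(t) = t Pr[S > t] = exp(-t) * sum_{n<l} t^(n+1)/n!.\<close>
definition G :: "nat \<Rightarrow> real \<Rightarrow> real" where
  "G l t = exp (- t) * (\<Sum>n<l. t ^ Suc n / fact n)"

text \<open>Differentiating the sum term by term telescopes against the sum itself.\<close>
lemma derivative_sum_telescope:
  "(\<Sum>n<Suc k. real (Suc n) * t ^ n / fact n) - (\<Sum>n<Suc k. t ^ Suc n / fact n)
    = (\<Sum>n<Suc k. t ^ n / fact n) - t ^ Suc k / fact k"
proof (induction k)
  case (Suc k)
  have "real (Suc (Suc k)) * t ^ Suc k / fact (Suc k) - t ^ Suc k / fact k = t ^ Suc k / fact (Suc k)"
    by (simp add: field_simps del: of_nat_Suc fact_Suc) (simp add: fact_Suc algebra_simps)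
  with Suc show ?case by (simp add: algebra_simps)
qed simp

lemma G_derivative:
  assumes "l \<ge> 1"
  shows "(G l has_real_derivative (- exp (- t) * phi l t)) (at t)"
proof -
  have sum_deriv: "((\<lambda>t. \<Sum>n<l. t ^ Suc n / fact n) has_real_derivative
      (\<Sum>n<l. real (Suc n) * t ^ n / fact n)) (at t)"
  proof (rule DERIV_sum)
    fix n
    have "((\<lambda>t. t ^ Suc n) has_real_derivative (1 + of_nat n) * (1 * t ^ n)) (at t)"
      by (rule DERIV_power_Suc) (rule DERIV_ident)
    from DERIV_cdivide[OF this, of "fact n"]
    show "((\<lambda>t. t ^ Suc n / fact n) has_real_derivative real (Suc n) * t ^ n / fact n) (at t)"
      by simp
  qed
  have exp_deriv: "((\<lambda>t. exp (- t)) has_real_derivative - exp (- t)) (at t)"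
    by (auto intro!: derivative_eq_intros)
  have "(G l has_real_derivative
      - exp (- t) * (\<Sum>n<l. t ^ Suc n / fact n) + exp (- t) * (\<Sum>n<l. real (Suc n) * t ^ n / fact n)) (at t)"
    using DERIV_mult[OF exp_deriv sum_deriv] unfolding G_def by (simp add: algebra_simps)
  moreover have "- exp (- t) * (\<Sum>n<l. t ^ Suc n / fact n) + exp (- t) * (\<Sum>n<l. real (Suc n) * t ^ n / fact n)
      = - exp (- t) * phi l t"
  proof -
    obtain k where k: "l = Suc k" using assms by (cases l) auto
    show ?thesis
      using derivative_sum_telescope[where k=k and t=t] unfolding k phi_def by (simp add: algebra_simps)
  qed
  ultimately show ?thesis by simp
qed

lemma continuous_G: "continuous_on A (G l)"
  unfolding G_def by (intro continuous_intros) auto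

text \<open>G increases up to the positive root y of phi, since G' = - exp(-t) phi(t) > 0 there ...\<close>
lemma G_strict_mono_below_root:
  assumes "l \<ge> 1" "phi l y = 0" "0 < a" "a < b" "b \<le> y"
  shows "G l a < G l b"
proof (rule DERIV_pos_imp_increasing_open[OF \<open>a < b\<close> _ continuous_G])
  fix x assume "a < x" "x < b"
  then have "phi l x < 0" using assms by (intro phi_neg_below_root[of l x y]) auto
  then show "\<exists>d. (G l has_real_derivative d) (at x) \<and> d > 0"
    using G_derivative[OF assms(1), of x] by (auto simp: mult_pos_neg)
qed

lemma G_strict_anti_above_root:
  assumes "l \<ge> 1" "phi l y = 0" "0 < y" "y \<le> a" "a < b"
  shows "G l b < G l a"
proof (rule DERIV_neg_imp_decreasing_open[OF \<open>a < b\<close> _ continuous_G])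
  fix x assume "a < x" "x < b"
  then have "phi l x > 0" using assms by (intro phi_pos_above_root[of l y x]) auto
  then show "\<exists>d. (G l has_real_derivative d) (at x) \<and> d < 0"
    using G_derivative[OF assms(1), of x] by auto
qed


subsection \<open>The squared modulus of a CN(0,1) variable is Exp(1)\<close>

lemma shifted_gamma_integral:
  "(\<integral>\<^sup>+s. ennreal ((s - a) ^ k * exp (- s)) * indicator {a..} s \<partial>lborel) = ennreal (fact k * exp (- a))"
proof -
  have shift: "ennreal (((a + 1 * u) - a) ^ k * exp (- (a + 1 * u))) * indicator {a..} (a + 1 * u)
      = ennreal (exp (- a)) * (ennreal (u ^ k * exp (- u)) * indicator {0..} u)" for u :: real
    using exp_add[of "- a" "- u"]
    by (cases "0 \<le> u") (auto simp: ennreal_mult'[symmetric] mult_ac split: split_indicator)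
  have "(\<integral>\<^sup>+s. ennreal ((s - a) ^ k * exp (- s)) * indicator {a..} s \<partial>lborel)
      = ennreal \<bar>1\<bar> * (\<integral>\<^sup>+u. ennreal (((a + 1 * u) - a) ^ k * exp (- (a + 1 * u)))
                               * indicator {a..} (a + 1 * u) \<partial>lborel)"
    by (rule nn_integral_real_affine) auto
  also have "\<dots> = (\<integral>\<^sup>+u. ennreal (exp (- a)) * (ennreal (u ^ k * exp (- u)) * indicator {0..} u) \<partial>lborel)"
    by (simp only: shift) simp
  also have "\<dots> = ennreal (exp (- a)) * ennreal (fact k)"
    by (simp add: nn_integral_cmult nn_intergal_power_times_exp_Ici)
  finally show ?thesis by (simp add: ennreal_mult'[symmetric] mult.commute)
qed

lemma annulus_measure:
  assumes "0 \<le> a"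
  shows "emeasure lborel {z::complex. a < (cmod z)^2 \<and> (cmod z)^2 \<le> s} = ennreal (pi * (s - a))"
proof (cases "s < a")
  case True
  then have empty: "{z::complex. a < (cmod z)^2 \<and> (cmod z)^2 \<le> s} = {}" by auto
  have "pi * (s - a) \<le> 0" using True by (simp add: mult_nonneg_nonpos)
  then show ?thesis unfolding empty by (simp add: ennreal_eq_0_iff)
next
  case False
  have sq: "(cmod x \<le> sqrt t) = ((cmod x)^2 \<le> t)" if "0 \<le> t" for x :: complex and t
    using that by (metis norm_ge_zero power_mono real_le_rsqrt real_sqrt_pow2)
  have annulus: "{z::complex. a < (cmod z)^2 \<and> (cmod z)^2 \<le> s} = cball 0 (sqrt s) - cball 0 (sqrt a)"
    using False assms by (auto simp: dist_norm sq)
  have disc_area: "unit_ball_vol 2 = pi" using unit_ball_vol_even[of 1] by simp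
  have "emeasure lborel (cball (0::complex) (sqrt s) - cball 0 (sqrt a))
     = emeasure lborel (cball (0::complex) (sqrt s)) - emeasure lborel (cball (0::complex) (sqrt a))"
    by (rule emeasure_Diff) (use False assms in \<open>auto simp: emeasure_cball sq\<close>)
  also have "\<dots> = ennreal (pi * s) - ennreal (pi * a)"
    using False assms by (simp add: emeasure_cball disc_area)
  also have "\<dots> = ennreal (pi * (s - a))"
    using False assms by (subst ennreal_minus) (auto simp: algebra_simps)
  finally show ?thesis by (simp add: annulus)
qed

text \<open>Tail of |z|^2 under the CN(0,1) density: write exp(-|z|^2) as the integral of
  exp(-s) over s \<ge> |z|^2, swap the integrals (Tonelli), and integrate the annulus area.\<close>
lemma cn01_tail:
  assumes a: "0 \<le> a"
  shows "(\<integral>\<^sup>+z. ennreal (cn01_density z) * indicator {z. a < (cmod z)^2} z \<partial>lborel) = ennreal (exp (- a))"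
proof -
  let ?A = "{z::complex. a < (cmod z)^2}"
  have density_split: "ennreal (exp t / pi) = ennreal (1 / pi) * ennreal (exp t)" for t
    by (subst ennreal_mult'[symmetric]) auto
  have exp_as_tail: "ennreal (exp (- r)) = (\<integral>\<^sup>+s. ennreal (exp (- s)) * indicator {r..} s \<partial>lborel)" for r
    using shifted_gamma_integral[of r 0] by simp
  have "(\<integral>\<^sup>+z. ennreal (cn01_density z) * indicator ?A z \<partial>lborel)
      = ennreal (1 / pi) * (\<integral>\<^sup>+z. ennreal (exp (- ((cmod z)^2))) * indicator ?A z \<partial>lborel)"
    by (subst nn_integral_cmult[symmetric])
       (auto intro!: nn_integral_cong simp: cn01_density_def density_split mult.assoc)
  also have "(\<integral>\<^sup>+z. ennreal (exp (- ((cmod z)^2))) * indicator ?A z \<partial>lborel)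
     = (\<integral>\<^sup>+z. (\<integral>\<^sup>+s. ennreal (exp (- s)) * indicator {(cmod z)^2..} s * indicator ?A z \<partial>lborel) \<partial>lborel)"
    by (intro nn_integral_cong) (simp add: exp_as_tail[of "(cmod z)^2" for z] nn_integral_multc)
  also have "\<dots> = (\<integral>\<^sup>+s. (\<integral>\<^sup>+z. ennreal (exp (- s)) * indicator {(cmod z)^2..} s * indicator ?A z \<partial>lborel) \<partial>lborel)"
  proof (rule lborel_pair.Fubini'[symmetric])
    have "(\<lambda>p::complex \<times> real. ennreal (exp (- snd p)) * (if (cmod (fst p))^2 \<le> snd p then 1 else 0)
            * (if a < (cmod (fst p))^2 then 1 else 0)) \<in> borel_measurable (lborel \<Otimes>\<^sub>M lborel)"
      by measurable
    then show "(\<lambda>(z, s). ennreal (exp (- s)) * indicator {(cmod z)^2..} s * indicator ?A z)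
        \<in> borel_measurable (lborel \<Otimes>\<^sub>M lborel)"
      by (simp add: indicator_def split_beta')
  qed
  also have "\<dots> = (\<integral>\<^sup>+s. ennreal pi * (ennreal ((s - a) ^ 1 * exp (- s)) * indicator {a..} s) \<partial>lborel)"
  proof (intro nn_integral_cong)
    fix s :: real
    have "(\<integral>\<^sup>+z. ennreal (exp (- s)) * indicator {(cmod z)^2..} s * indicator ?A z \<partial>lborel)
       = (\<integral>\<^sup>+z. ennreal (exp (- s)) * indicator {z::complex. a < (cmod z)^2 \<and> (cmod z)^2 \<le> s} z \<partial>lborel)"
      by (intro nn_integral_cong) (auto split: split_indicator)
    also have "\<dots> = ennreal (exp (- s)) * emeasure lborel {z::complex. a < (cmod z)^2 \<and> (cmod z)^2 \<le> s}"
      by (rule nn_integral_cmult_indicator) measurable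
    also have "\<dots> = ennreal (exp (- s)) * ennreal (pi * (s - a))"
      using a by (simp add: annulus_measure)
    also have "\<dots> = ennreal pi * (ennreal ((s - a) ^ 1 * exp (- s)) * indicator {a..} s)"
    proof (cases "a \<le> s")
      case True
      then show ?thesis by (simp add: ennreal_mult[symmetric] mult_ac)
    next
      case False
      then have "pi * (s - a) \<le> 0" by (simp add: mult_nonneg_nonpos)
      with False show ?thesis by (simp add: ennreal_eq_0_iff)
    qed
    finally show "(\<integral>\<^sup>+z. ennreal (exp (- s)) * indicator {(cmod z)^2..} s * indicator ?A z \<partial>lborel)
        = ennreal pi * (ennreal ((s - a) ^ 1 * exp (- s)) * indicator {a..} s)" .
  qed
  also have "\<dots> = ennreal pi * ennreal (exp (- a))"
    using shifted_gamma_integral[of a 1] by (simp add: nn_integral_cmult)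
  finally show ?thesis by (simp add: ennreal_mult'[symmetric])
qed

lemma (in prob_space) cn01_sq_exponential:
  assumes D: "distributed M lborel H (\<lambda>z. ennreal (cn01_density z))"
  shows "distributed M lborel (\<lambda>\<omega>. (cmod (H \<omega>))^2) (exponential_density 1)"
proof -
  have H_meas[measurable]: "H \<in> borel_measurable M" using distributed_measurable[OF D] by simp
  have sq_meas: "(\<lambda>\<omega>. (cmod (H \<omega>))^2) \<in> borel_measurable M" by measurable
  have "\<P>(\<omega> in M. (cmod (H \<omega>))^2 \<le> a) = 1 - exp (- a * 1)" if a: "0 \<le> a" for a
  proof -
    have "emeasure M {\<omega>\<in>space M. a < (cmod (H \<omega>))^2} = emeasure (distr M lborel H) {z. a < (cmod z)^2}"
      by (subst emeasure_distr) (auto intro!: arg_cong2[where f=emeasure])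
    also have "\<dots> = (\<integral>\<^sup>+z. ennreal (cn01_density z) * indicator {z. a < (cmod z)^2} z \<partial>lborel)"
      unfolding distributed_distr_eq_density[OF D]
      by (rule emeasure_density) (auto simp: cn01_density_def)
    also have "\<dots> = ennreal (exp (- a))" by (rule cn01_tail[OF a])
    finally have tail: "prob {\<omega>\<in>space M. a < (cmod (H \<omega>))^2} = exp (- a)"
      by (simp add: emeasure_eq_measure)
    have "prob {\<omega>\<in>space M. (cmod (H \<omega>))^2 \<le> a} = prob (space M - {\<omega>\<in>space M. a < (cmod (H \<omega>))^2})"
      by (intro arg_cong[where f=prob]) auto
    also have "\<dots> = 1 - prob {\<omega>\<in>space M. a < (cmod (H \<omega>))^2}" by (rule prob_compl) measurable
    finally show ?thesis using tail by simp
  qed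
  then show ?thesis by (subst exponential_distributed_iff) (auto intro: sq_meas)
qed


subsection \<open>The sum of squared moduli of i.i.d. CN(0,1) variables\<close>

locale iid_cn01 = prob_space M for M :: "'a measure" +
  fixes h :: "nat \<Rightarrow> 'a \<Rightarrow> complex" and l :: nat
  assumes indep: "indep_vars (\<lambda>_. borel) h {..<l}"
    and cn01: "\<And>i. i < l \<Longrightarrow> distributed M lborel (h i) (\<lambda>z. ennreal (cn01_density z))"
begin

text \<open>S = sum |h_i|^2 is a sum of l independent Exp(1) variables, i.e. Erlang.\<close>
lemma sum_sq_erlang:
  assumes "l \<ge> 1"
  shows "distributed M lborel (\<lambda>\<omega>. \<Sum>i<l. (cmod (h i \<omega>))^2) (erlang_density (l - 1) 1)"
proof -
  have "indep_vars (\<lambda>_. borel) (\<lambda>i \<omega>. (cmod (h i \<omega>))^2) {..<l}"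
    by (rule indep_vars_compose2[OF indep]) measurable
  then have "distributed M lborel (\<lambda>\<omega>. \<Sum>i\<in>{..<l}. (cmod (h i \<omega>))^2)
      (erlang_density (card {..<l} - 1) 1)"
    using cn01_sq_exponential[OF cn01] assms
    by (intro exponential_distributed_sum) (auto simp: lessThan_empty_iff)
  then show ?thesis by simp
qed

lemma sum_sq_tail:
  assumes "l \<ge> 1" "0 \<le> t"
  shows "measure M {\<omega>\<in>space M. t < (\<Sum>i<l. (cmod (h i \<omega>))\<^sup>2)} = exp (- t) * (\<Sum>n<l. t ^ n / fact n)"
proof -
  obtain k where k: "l = Suc k" using assms by (cases l) auto
  have "prob {\<omega>\<in>space M. t < (\<Sum>i<l. (cmod (h i \<omega>))\<^sup>2)} = 1 - erlang_CDF k 1 t"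
    using erlang_distributed_gt[OF sum_sq_erlang[OF assms(1)] _ assms(2)] k by simp
  also have "\<dots> = exp (- t) * (\<Sum>n<l. t ^ n / fact n)"
    using assms(2) unfolding erlang_CDF_def k lessThan_Suc_atMost
    by (simp add: sum_distrib_left mult_ac)
  finally show ?thesis .
qed

lemma psi_eq_G:
  assumes "l \<ge> 1" "c > 0" "x > 0"
  shows "psi M h l c x = G l (real l * c / x) / (real l * c)"
proof -
  define t where "t = real l * c / x"
  have "psi M h l c x = (1 / x) * (exp (- t) * (\<Sum>n<l. t ^ n / fact n))"
    unfolding psi_def using sum_sq_tail[OF assms(1), of t] assms by (simp add: t_def)
  moreover have "G l t = t * (exp (- t) * (\<Sum>n<l. t ^ n / fact n))"
    unfolding G_def by (simp add: sum_distrib_left mult_ac)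
  ultimately show ?thesis using assms by (simp add: t_def)
qed

text \<open>Since x \<mapsto> l c/x is decreasing, the monotonicity of G around the root y of phi
  transfers to psi with the roles of the two pieces exchanged at the peak l c/y.\<close>
lemma psi_strict_mono_before_peak:
  assumes "l \<ge> 1" "c > 0" "y > 0" "phi l y = 0" "0 < a" "a < b" "b \<le> real l * c / y"
  shows "psi M h l c a < psi M h l c b"
proof -
  have lc: "real l * c > 0" using assms by simp
  have "y \<le> real l * c / b" using assms by (simp add: le_divide_eq field_simps)
  moreover have "real l * c / b < real l * c / a" using assms lc by (intro divide_strict_left_mono) auto
  ultimately have "G l (real l * c / a) < G l (real l * c / b)"
    using G_strict_anti_above_root[OF assms(1,4,3)] by blast
  then show ?thesis using assms lc by (simp add: psi_eq_G divide_strict_right_mono)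
qed

lemma psi_strict_anti_after_peak:
  assumes "l \<ge> 1" "c > 0" "y > 0" "phi l y = 0" "real l * c / y \<le> a" "a < b"
  shows "psi M h l c b < psi M h l c a"
proof -
  have lc: "real l * c > 0" using assms by simp
  have a: "a > 0" using assms lc by (meson divide_pos_pos less_le_trans)
  have "real l * c / a \<le> y" using assms a by (simp add: divide_le_eq field_simps)
  moreover have "real l * c / b < real l * c / a" using assms lc a by (intro divide_strict_left_mono) auto
  moreover have "0 < real l * c / b" using lc assms a by simp
  ultimately have "G l (real l * c / b) < G l (real l * c / a)"
    using G_strict_mono_below_root[OF assms(1,4)] by blast
  then show ?thesis using assms a lc by (simp add: psi_eq_G divide_strict_right_mono)
qed

end


theorem mainTheorem6:
  fixes M :: "'a measure" and h :: "nat \<Rightarrow> 'a \<Rightarrow> complex" and l :: nat and c :: real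
  assumes "prob_space M"
    and "l \<ge> 1" and "c > 0"
    and "prob_space.indep_vars M (\<lambda>_. borel) h {..<l}"
    and "\<And>i. i < l \<Longrightarrow> distributed M lborel (h i) (\<lambda>z. ennreal (cn01_density z))"
  shows "(\<exists>!y. y > 0 \<and> phi l y = 0)
    \<and> (\<forall>y. y > 0 \<and> phi l y = 0 \<longrightarrow>
          y \<le> real l
        \<and> real l * c / y \<ge> c
        \<and> (\<forall>a b. 0 < a \<and> a < b \<and> b \<le> real l * c / y \<longrightarrow> psi M h l c a < psi M h l c b)
        \<and> (\<forall>a b. real l * c / y \<le> a \<and> a < b \<longrightarrow> psi M h l c b < psi M h l c a))"
proof -
  interpret iid_cn01 M h l
    using assms(1,4,5) by (simp add: iid_cn01_def iid_cn01_axioms_def)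
  show ?thesis
  proof (intro conjI allI impI)
    show "\<exists>!y. y > 0 \<and> phi l y = 0" using phi_unique_positive_root[OF assms(2)] .
    fix y assume root: "y > 0 \<and> phi l y = 0"
    then show y_le_l: "y \<le> real l" using phi_positive_root_le[OF assms(2)] by blast
    show "real l * c / y \<ge> c"
      using root y_le_l \<open>c > 0\<close> by (simp add: le_divide_eq mult_left_mono mult.commute)
    show "psi M h l c a < psi M h l c b" if "0 < a \<and> a < b \<and> b \<le> real l * c / y" for a b
      using psi_strict_mono_before_peak[OF assms(2,3)] root that by blast
    show "psi M h l c b < psi M h l c a" if "real l * c / y \<le> a \<and> a < b" for a b
      using psi_strict_anti_after_peak[OF assms(2,3)] root that by blast
  qed
qed

end
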